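(* Let $0\le\gamma\le1$ and $d\ge1$ with $\mathsf{err}(\gamma,d)>0$, and let $f\colon\{0,1\}^m\to\{0,1\}^n$ be a $d$-local function. Then there exist a set $S\subseteq[m]$ and a number $r$ with $$|S|\le\frac{\mathsf{err}(\gamma,d)^2\cdot r}{4}\quad\text{and}\quad r\ge n\cdot\left(\frac{\mathsf{err}(\gamma,d)^2}{16d}\right)^{2d+1}$$ such that for every fixing $\rho\in\{0,1\}^S$ of the input bits in $S$, the restricted function $f_\rho\colon\{0,1\}^{[m]\setminus S}\to\{0,1\}^n$ is $(d,r)$-local.
   Context: A function $f\colon\{0,1\}^m\to\{0,1\}^n$ is $d$-local if each output bit depends on at most $d$ input bits; $I_f(i)$ denotes the set of input coordinates on which output bit $i$ depends. Fixing the inputs in $S$ to $\rho$ yields $f_\rho(z')=f(\rho,z')$ for $z'\in\{0,1\}^{[m]\setminus S}$. Output bits $i_1,\dots,i_r$ of a function $g$ are non-connected if the sets $I_g(i_1),\dots,I_g(i_r)$ are pairwise disjoint. $g$ is $(d,r)$-local if it is $d$-local and has $r$ non-connected output bits. $\mathsf{err}(\gamma,t)$ is the minimum distance of $\gamma$ to an integer multiple of $2^{-t}$. *)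

theory Defs
  imports Complex_Main
begin

text \<open>Boolean vectors indexed by a finite coordinate set D are functions
  nat => bool that are False outside D. A function from {0,1}^D to {0,1}^n
  is a map g :: (nat => bool) => (nat => bool); only inputs in cube D and
  outputs with index < n matter.\<close>

definition cube :: "nat set \<Rightarrow> (nat \<Rightarrow> bool) set" where
  "cube D = {x. \<forall>j. j \<notin> D \<longrightarrow> x j = False}"

definition depset :: "nat set \<Rightarrow> ((nat \<Rightarrow> bool) \<Rightarrow> nat \<Rightarrow> bool) \<Rightarrow> nat \<Rightarrow> nat set" where
  "depset D g i = {j \<in> D. \<exists>x \<in> cube D. g x i \<noteq> g (x(j := \<not> x j)) i}"

definition is_local :: "nat set \<Rightarrow> nat \<Rightarrow> ((nat \<Rightarrow> bool) \<Rightarrow> nat \<Rightarrow> bool) \<Rightarrow> nat \<Rightarrow> bool" where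
  "is_local D n g d \<longleftrightarrow> (\<forall>i<n. card (depset D g i) \<le> d)"

definition non_connected :: "nat set \<Rightarrow> ((nat \<Rightarrow> bool) \<Rightarrow> nat \<Rightarrow> bool) \<Rightarrow> nat set \<Rightarrow> bool" where
  "non_connected D g I \<longleftrightarrow> pairwise (\<lambda>i k. depset D g i \<inter> depset D g k = {}) I"

definition dr_local :: "nat set \<Rightarrow> nat \<Rightarrow> ((nat \<Rightarrow> bool) \<Rightarrow> nat \<Rightarrow> bool) \<Rightarrow> nat \<Rightarrow> nat \<Rightarrow> bool" where
  "dr_local D n g d r \<longleftrightarrow> is_local D n g d \<and>
     (\<exists>I \<subseteq> {..<n}. card I = r \<and> non_connected D g I)"

definition restrict_fn :: "((nat \<Rightarrow> bool) \<Rightarrow> nat \<Rightarrow> bool) \<Rightarrow> nat set \<Rightarrow> (nat \<Rightarrow> bool) \<Rightarrow> (nat \<Rightarrow> bool) \<Rightarrow> nat \<Rightarrow> bool" where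
  "restrict_fn f S \<rho> = (\<lambda>z. f (\<lambda>j. if j \<in> S then \<rho> j else z j))"

definition err :: "real \<Rightarrow> nat \<Rightarrow> real" where
  "err \<gamma> t = (INF k::int. \<bar>\<gamma> - real_of_int k / 2 ^ t\<bar>)"

end

theory Submission
  imports Defs
begin

text \<open>Let \<open>E i = I_f(i)\<close> and suppose all \<open>|E i| \<le> j\<close>. Take a maximal family \<open>M\<close> of output
  bits with pairwise disjoint dependency sets. If \<open>|M| \<ge> q^j n\<close> we are done. Otherwise delete
  the fewer than \<open>j q \<cdot> q^(j-1) n\<close> input bits of \<open>\<Union>k\<in>M. E k\<close>: by maximality every nonempty
  \<open>E i\<close> meets this set, so every dependency set loses an element and we recurse with \<open>j - 1\<close>.
  When \<open>j = 0\<close> all dependency sets are empty, so the recursion stops with a disjoint family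
  \<open>I\<close> of size \<open>|I| \<ge> q^d n\<close>, and each round deleted at most \<open>d q |I|\<close> bits. Hence
  \<open>|S| \<le> d\<^sup>2 q |I|\<close>, and \<open>q = err(\<gamma>,d)\<^sup>2 / (4 d\<^sup>2)\<close> gives both bounds.\<close>

lemma maximal_disjoint_subfamily:
  fixes E :: "'i \<Rightarrow> 'a set"
  assumes "finite N"
  obtains M where "M \<subseteq> N" "pairwise (\<lambda>i k. E i \<inter> E k = {}) M"
    "\<And>i. i \<in> N \<Longrightarrow> E i \<noteq> {} \<Longrightarrow> E i \<inter> (\<Union>k\<in>M. E k) \<noteq> {}"
proof -
  let ?F = "{M. M \<subseteq> N \<and> pairwise (\<lambda>i k. E i \<inter> E k = {}) M}"
  have "finite ?F" using assms by simp
  moreover have "{} \<in> ?F" by simp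
  ultimately obtain M where M: "M \<in> ?F" and max: "\<forall>M'\<in>?F. M \<subseteq> M' \<longrightarrow> M = M'"
    using finite_has_maximal[of ?F] by blast
  have "E i \<inter> (\<Union>k\<in>M. E k) \<noteq> {}" if "i \<in> N" "E i \<noteq> {}" for i
  proof
    assume disj: "E i \<inter> (\<Union>k\<in>M. E k) = {}"
    with \<open>E i \<noteq> {}\<close> have "i \<notin> M" by blast
    with disj M \<open>i \<in> N\<close> have "insert i M \<in> ?F" by (auto simp: pairwise_insert)
    with max have "M = insert i M" by blast
    with \<open>i \<notin> M\<close> show False by blast
  qed
  with M that show thesis by blast
qed

lemma card_UN_le_mult:
  assumes "finite M" "\<And>k. k \<in> M \<Longrightarrow> card (E k) \<le> b"
  shows "card (\<Union>k\<in>M. E k) \<le> b * card M"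
proof -
  have "card (\<Union>k\<in>M. E k) \<le> (\<Sum>k\<in>M. card (E k))" by (rule card_UN_le[OF assms(1)])
  also have "\<dots> \<le> (\<Sum>k\<in>M. b)" using assms(2) by (rule sum_mono)
  finally show ?thesis by (simp add: mult.commute)
qed

lemma card_Diff_hitting_le:
  assumes "finite A" "card A \<le> Suc j" "A \<noteq> {} \<Longrightarrow> A \<inter> U \<noteq> {}"
  shows "card (A - U) \<le> j"
proof (cases "A = {}")
  case False
  with assms(3) have "A - U \<subset> A" by blast
  with assms(1) have "card (A - U) < card A" by (intro psubset_card_mono)
  with assms(2) show ?thesis by linarith
qed simp

lemma maximal_disjoint_subfamily_shrinks:
  fixes E :: "'i \<Rightarrow> 'a set"
  assumes "finite N" "\<forall>i\<in>N. finite (E i) \<and> card (E i) \<le> Suc j"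
  obtains M where "M \<subseteq> N" "pairwise (\<lambda>i k. E i \<inter> E k = {}) M"
    "card (\<Union>k\<in>M. E k) \<le> Suc j * card M"
    "\<forall>i\<in>N. finite (E i - (\<Union>k\<in>M. E k)) \<and> card (E i - (\<Union>k\<in>M. E k)) \<le> j"
proof -
  obtain M where M: "M \<subseteq> N" "pairwise (\<lambda>i k. E i \<inter> E k = {}) M"
    and hit: "\<And>i. i \<in> N \<Longrightarrow> E i \<noteq> {} \<Longrightarrow> E i \<inter> (\<Union>k\<in>M. E k) \<noteq> {}"
    using maximal_disjoint_subfamily[OF assms(1)] by blast
  have "finite M" using M(1) assms(1) by (rule finite_subset)
  then have "card (\<Union>k\<in>M. E k) \<le> Suc j * card M"
    using assms(2) M(1) by (intro card_UN_le_mult) auto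
  moreover have "\<forall>i\<in>N. finite (E i - (\<Union>k\<in>M. E k)) \<and> card (E i - (\<Union>k\<in>M. E k)) \<le> j"
  proof
    fix i assume "i \<in> N"
    then have "finite (E i)" "card (E i) \<le> Suc j" using assms(2) by auto
    with hit[OF \<open>i \<in> N\<close>] show "finite (E i - (\<Union>k\<in>M. E k)) \<and> card (E i - (\<Union>k\<in>M. E k)) \<le> j"
      using card_Diff_hitting_le by blast
  qed
  ultimately show thesis using M that by blast
qed

lemma greedy_disjoint_after_deletion:
  fixes E :: "'i \<Rightarrow> 'a set" and q c :: real
  assumes "finite N" "\<forall>i\<in>N. finite (E i) \<and> card (E i) \<le> j"
    and "0 < q" "q \<le> 1" "real j * q \<le> c"
  shows "\<exists>S I. S \<subseteq> (\<Union>i\<in>N. E i) \<and> I \<subseteq> N \<and> pairwise (\<lambda>i k. (E i - S) \<inter> (E k - S) = {}) I \<and>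
     real (card S) \<le> c * real j * real (card I) \<and> real (card N) * q ^ j \<le> real (card I)"
  using assms(2,5)
proof (induction j arbitrary: E)
  case 0
  then have "\<forall>i\<in>N. E i = {}" by auto
  then have "pairwise (\<lambda>i k. (E i - {}) \<inter> (E k - {}) = {}) N" by (simp add: pairwise_def)
  then show ?case by (intro exI[of _ "{}"] exI[of _ N]) simp
next
  case (Suc j)
  obtain M where "M \<subseteq> N" "pairwise (\<lambda>i k. E i \<inter> E k = {}) M"
    and U_card: "card (\<Union>k\<in>M. E k) \<le> Suc j * card M"
    and shrunk: "\<forall>i\<in>N. finite (E i - (\<Union>k\<in>M. E k)) \<and> card (E i - (\<Union>k\<in>M. E k)) \<le> j"
    using maximal_disjoint_subfamily_shrinks[OF assms(1) Suc.prems(1)] by blast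
  have "0 \<le> real (Suc j) * q" using assms(3) by simp
  with Suc.prems(2) have "0 \<le> c" by linarith
  show ?case
  proof (cases "real (card N) * q ^ Suc j \<le> real (card M)")
    case True
    with \<open>M \<subseteq> N\<close> \<open>pairwise (\<lambda>i k. E i \<inter> E k = {}) M\<close> \<open>0 \<le> c\<close> show ?thesis
      by (intro exI[of _ "{}"] exI[of _ M]) simp
  next
    case False
    define U where "U = (\<Union>k\<in>M. E k)"
    have "real (card U) \<le> real (Suc j) * real (card M)"
      using U_card unfolding U_def by (metis of_nat_le_iff of_nat_mult)
    also have "\<dots> \<le> real (Suc j) * (real (card N) * q ^ Suc j)"
      using False by (intro mult_left_mono) auto
    also have "\<dots> = (real (Suc j) * q) * (real (card N) * q ^ j)"
      by (simp add: mult_ac)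
    finally have U_le: "real (card U) \<le> (real (Suc j) * q) * (real (card N) * q ^ j)" .
    note shrunk[folded U_def]
    moreover have "real j * q \<le> c" using Suc.prems(2) assms(3) by (simp add: algebra_simps)
    ultimately obtain S I where "S \<subseteq> (\<Union>i\<in>N. E i - U)" "I \<subseteq> N"
      and disj: "pairwise (\<lambda>i k. (E i - U - S) \<inter> (E k - U - S) = {}) I"
      and S_le: "real (card S) \<le> c * real j * real (card I)"
      and I_ge: "real (card N) * q ^ j \<le> real (card I)"
      using Suc.IH[of "\<lambda>i. E i - U"] by blast
    have "real (card (U \<union> S)) \<le> real (card U) + real (card S)"
      using card_Un_le[of U S] by linarith
    also have "\<dots> \<le> c * real (card I) + c * real j * real (card I)"
    proof -
      have "(real (Suc j) * q) * (real (card N) * q ^ j) \<le> c * real (card I)"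
        using Suc.prems(2) I_ge \<open>0 \<le> c\<close> assms(3) by (intro mult_mono) auto
      with U_le S_le show ?thesis by linarith
    qed
    finally have "real (card (U \<union> S)) \<le> c * real (Suc j) * real (card I)"
      by (simp add: algebra_simps)
    moreover have "real (card N) * q ^ Suc j \<le> real (card I)"
    proof -
      have "real (card N) * q ^ Suc j = (real (card N) * q ^ j) * q" by simp
      also have "\<dots> \<le> real (card N) * q ^ j" using assms(3,4) by (intro mult_left_le) auto
      finally show ?thesis using I_ge by linarith
    qed
    moreover have "U \<union> S \<subseteq> (\<Union>i\<in>N. E i)" using \<open>S \<subseteq> _\<close> \<open>M \<subseteq> N\<close> unfolding U_def by blast
    moreover have "\<And>i. E i - (U \<union> S) = E i - U - S" by blast
    ultimately show ?thesis using disj \<open>I \<subseteq> N\<close>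
      by (intro exI[of _ "U \<union> S"] exI[of _ I]) simp
  qed
qed

lemma depset_subset: "depset D g i \<subseteq> D"
  unfolding depset_def by auto

lemma is_local_depset_bound:
  assumes "finite D" "is_local D n f d"
  shows "\<forall>i\<in>{..<n}. finite (depset D f i) \<and> card (depset D f i) \<le> d"
  using assms finite_subset[OF depset_subset] unfolding is_local_def by auto

lemma depset_restrict_fn_subset:
  assumes "S \<subseteq> D" "\<rho> \<in> cube S"
  shows "depset (D - S) (restrict_fn f S \<rho>) i \<subseteq> depset D f i - S"
proof
  fix j assume "j \<in> depset (D - S) (restrict_fn f S \<rho>) i"
  then obtain x where j: "j \<in> D - S" and x: "x \<in> cube (D - S)"
    and flip: "restrict_fn f S \<rho> x i \<noteq> restrict_fn f S \<rho> (x(j := \<not> x j)) i"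
    unfolding depset_def by blast
  define y where "y = (\<lambda>k. if k \<in> S then \<rho> k else x k)"
  have "y \<in> cube D" using x assms(1) unfolding y_def cube_def by auto
  moreover have "(\<lambda>k. if k \<in> S then \<rho> k else (x(j := \<not> x j)) k) = y(j := \<not> y j)"
    using j unfolding y_def by (auto simp: fun_eq_iff)
  then have "f y i \<noteq> f (y(j := \<not> y j)) i" using flip unfolding restrict_fn_def y_def by simp
  ultimately show "j \<in> depset D f i - S" using j unfolding depset_def by auto
qed

lemma dr_local_restrict_fn:
  assumes "finite D" "is_local D n f d" "S \<subseteq> D" "\<rho> \<in> cube S" "I \<subseteq> {..<n}"
    and "pairwise (\<lambda>i k. (depset D f i - S) \<inter> (depset D f k - S) = {}) I"
  shows "dr_local (D - S) n (restrict_fn f S \<rho>) d (card I)"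
proof -
  let ?g = "restrict_fn f S \<rho>"
  have sub: "depset (D - S) ?g i \<subseteq> depset D f i" for i
    using depset_restrict_fn_subset[OF assms(3,4)] by blast
  have "card (depset (D - S) ?g i) \<le> card (depset D f i)" for i
    using sub assms(1) by (meson card_mono depset_subset finite_subset)
  then have "is_local (D - S) n ?g d"
    using assms(2) unfolding is_local_def by (meson order_trans)
  moreover have "non_connected (D - S) ?g I"
    using assms(6) depset_restrict_fn_subset[OF assms(3,4)]
    unfolding non_connected_def pairwise_def by blast
  ultimately show ?thesis using assms(5) unfolding dr_local_def by blast
qed

lemma err_le_abs: "err \<gamma> t \<le> \<bar>\<gamma>\<bar>"
proof -
  have "bdd_below (range (\<lambda>k::int. \<bar>\<gamma> - real_of_int k / 2 ^ t\<bar>))"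
    by (rule bdd_belowI[of _ 0]) auto
  then have "err \<gamma> t \<le> \<bar>\<gamma> - real_of_int 0 / 2 ^ t\<bar>" unfolding err_def by (rule cINF_lower) simp
  then show ?thesis by simp
qed

lemma power_odd_le_power_half:
  fixes a :: real and d :: nat
  assumes "0 < a" "a \<le> 1" "d \<ge> 1"
  shows "(a / (16 * real d)) ^ (2 * d + 1) \<le> (a / (4 * real d ^ 2)) ^ d"
proof -
  let ?x = "a / (16 * real d)"
  have "0 \<le> ?x" "?x \<le> 1" using assms by (auto simp: divide_le_eq)
  then have "?x ^ (2 * d + 1) \<le> ?x ^ (2 * d)" by (intro power_decreasing) auto
  also have "\<dots> = (?x ^ 2) ^ d" by (simp add: power_mult)
  also have "\<dots> \<le> (a / (4 * real d ^ 2)) ^ d"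
  proof (rule power_mono)
    have "a * a \<le> 64 * a" using assms by simp
    then show "?x ^ 2 \<le> a / (4 * real d ^ 2)"
      using assms by (simp add: power2_eq_square field_simps)
  qed simp
  finally show ?thesis .
qed

theorem mainTheorem4:
  fixes \<gamma> :: real and d m n :: nat
    and f :: "(nat \<Rightarrow> bool) \<Rightarrow> nat \<Rightarrow> bool"
  assumes "0 \<le> \<gamma>" and "\<gamma> \<le> 1" and "d \<ge> 1"
    and "err \<gamma> d > 0"
    and "is_local {..<m} n f d"
  shows "\<exists>S r. S \<subseteq> {..<m} \<and>
           real (card S) \<le> (err \<gamma> d)\<^sup>2 * real r / 4 \<and>
           real r \<ge> real n * ((err \<gamma> d)\<^sup>2 / (16 * real d)) ^ (2 * d + 1) \<and>
           (\<forall>\<rho> \<in> cube S. dr_local ({..<m} - S) n (restrict_fn f S \<rho>) d r)"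
proof -
  define a where "a = (err \<gamma> d)\<^sup>2"
  define q where "q = a / (4 * real d ^ 2)"
  have a: "0 < a" "a \<le> 1"
    using assms err_le_abs[of \<gamma> d] unfolding a_def by (auto simp: power_le_one)
  have "1 \<le> real d ^ 2" using assms(3) by simp
  with a have "a \<le> 4 * real d ^ 2" by linarith
  then have "q \<le> 1" using assms(3) unfolding q_def by (simp add: divide_le_eq)
  moreover have "0 < q" using a assms(3) unfolding q_def by simp
  moreover note is_local_depset_bound[OF finite_lessThan assms(5)]
  ultimately obtain S I where S: "S \<subseteq> (\<Union>i\<in>{..<n}. depset {..<m} f i)" and "I \<subseteq> {..<n}"
    and disj: "pairwise (\<lambda>i k. (depset {..<m} f i - S) \<inter> (depset {..<m} f k - S) = {}) I"
    and S_le: "real (card S) \<le> real d * q * real d * real (card I)"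
    and I_ge: "real n * q ^ d \<le> real (card I)"
    using greedy_disjoint_after_deletion[of "{..<n}" "depset {..<m} f" d q "real d * q"] by auto
  have "S \<subseteq> {..<m}" using S depset_subset by blast
  moreover have "real (card S) \<le> a * real (card I) / 4"
    using S_le assms(3) unfolding q_def by (simp add: power2_eq_square)
  moreover have "real n * (a / (16 * real d)) ^ (2 * d + 1) \<le> real n * q ^ d"
    unfolding q_def using power_odd_le_power_half[OF a assms(3)] by (intro mult_left_mono) simp_all
  with I_ge have "real n * (a / (16 * real d)) ^ (2 * d + 1) \<le> real (card I)" by linarith
  moreover have "\<forall>\<rho>\<in>cube S. dr_local ({..<m} - S) n (restrict_fn f S \<rho>) d (card I)"
    using dr_local_restrict_fn[OF _ assms(5) \<open>S \<subseteq> {..<m}\<close> _ \<open>I \<subseteq> {..<n}\<close> disj] by simp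
  ultimately show ?thesis unfolding a_def by blast
qed

end
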